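(* Let $d\ge 2$ and let $D$ be obtained by gluing domains $D_1,\dots,D_m\subset T_d$ at a vertex $p$. Then $D$ is optimal if and only if either $p\in\partial D$ and $\sum_{i=1}^m\tau(D_i)+(m-1)\le d-2$, or $p\notin\partial D$ and $\sum_{i=1}^m\tau(D_i)-(d-m)\le d-2$.
   Context: $T_d$ is the $d$-regular tree (connected, acyclic, every vertex of degree $d$). A domain is a finite nonempty connected set $D$ of vertices of $T_d$, identified with its induced subgraph. For $x\in D$, $\deg_D(x)$ is the number of neighbours of $x$ lying in $D$. The (inner vertex) boundary is $\partial D=\{x\in D:\deg_D(x)<d\}$. For $k\ge1$, $I_d(k)=\min\{|\partial D| : D\subset T_d \text{ a domain with } |D|=k\}$, and $D$ is optimal if $|\partial D|=I_d(|D|)$. For $|D|\ge2$, $\tau(D)=\sum_{x\in\partial D}(\deg_D(x)-1)$. Gluing: given domains $D_1,\dots,D_m$ with $|D_i|\ge 2$, $2\le m\le d$, and a vertex $p$ with $p\in\partial D_i$ for all $i$, one says $D$ is obtained by gluing $D_1,\dots,D_m$ at $p$ if $D=\bigcup_{i=1}^m D_i$ and $D_i\cap D_j=\{p\}$ for all $i\ne j$. *)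

theory Defs
  imports Main
begin

text \<open>Concrete model of the d-regular tree T_d: vertices are words of naturals.
  The root is the empty word; it has the d children [i] (i < d); every other
  vertex xs has the d-1 children xs @ [i] (i < d - 1). Adjacency is the
  parent/child relation, so every vertex has degree exactly d and the graph is
  a connected acyclic tree.\<close>

definition tree_vertices :: "nat \<Rightarrow> nat list set" where
  "tree_vertices d = {xs. xs = [] \<or> (hd xs < d \<and> (\<forall>i \<in> set (tl xs). i < d - 1))}"

definition tree_adj :: "nat \<Rightarrow> nat list \<Rightarrow> nat list \<Rightarrow> bool" where
  "tree_adj d x y \<longleftrightarrow> x \<in> tree_vertices d \<and> y \<in> tree_vertices d \<and>
     ((\<exists>i. y = x @ [i]) \<or> (\<exists>i. x = y @ [i]))"

definition induced_edges :: "nat \<Rightarrow> nat list set \<Rightarrow> (nat list \<times> nat list) set" where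
  "induced_edges d D = {(x, y). x \<in> D \<and> y \<in> D \<and> tree_adj d x y}"

definition is_domain :: "nat \<Rightarrow> nat list set \<Rightarrow> bool" where
  "is_domain d D \<longleftrightarrow> finite D \<and> D \<noteq> {} \<and> D \<subseteq> tree_vertices d \<and>
     (\<forall>x \<in> D. \<forall>y \<in> D. (x, y) \<in> (induced_edges d D)\<^sup>*)"

definition degD :: "nat \<Rightarrow> nat list set \<Rightarrow> nat list \<Rightarrow> nat" where
  "degD d D x = card {y \<in> D. tree_adj d x y}"

definition bdry :: "nat \<Rightarrow> nat list set \<Rightarrow> nat list set" where
  "bdry d D = {x \<in> D. degD d D x < d}"

definition Iso :: "nat \<Rightarrow> nat \<Rightarrow> nat" where
  "Iso d k = Min {card (bdry d D) | D. is_domain d D \<and> card D = k}"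

definition optimal :: "nat \<Rightarrow> nat list set \<Rightarrow> bool" where
  "optimal d D \<longleftrightarrow> card (bdry d D) = Iso d (card D)"

definition tau :: "nat \<Rightarrow> nat list set \<Rightarrow> int" where
  "tau d D = (\<Sum>x \<in> bdry d D. int (degD d D x) - 1)"

definition glued_at :: "nat \<Rightarrow> nat list set \<Rightarrow> nat \<Rightarrow> (nat \<Rightarrow> nat list set) \<Rightarrow> nat list \<Rightarrow> bool" where
  "glued_at d D m Ds p \<longleftrightarrow> 2 \<le> m \<and> m \<le> d \<and>
     (\<forall>i \<in> {1..m}. is_domain d (Ds i) \<and> card (Ds i) \<ge> 2 \<and> p \<in> bdry d (Ds i)) \<and>
     D = (\<Union>i \<in> {1..m}. Ds i) \<and>
     (\<forall>i \<in> {1..m}. \<forall>j \<in> {1..m}. i \<noteq> j \<longrightarrow> Ds i \<inter> Ds j = {p})"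

end

(*
  Counting degrees in the tree D gives (d - 1) |\<partial>D| = \<tau>(D) + (d - 2) |D| + 2, so among
  domains of a fixed size k \<ge> 2 minimising the boundary means minimising \<tau>. Since \<tau> \<ge> 0,
  and growing a domain leaf by leaf produces domains of every size with \<tau> \<le> d - 2, the
  optimal domains are exactly those with \<tau> \<le> d - 2.

  Gluing at p does not change degrees away from p, and deg_D p is the sum of the deg_{D_i} p.
  Each D_i has p on its boundary, contributing deg_{D_i} p - 1 to \<tau>(D_i), whereas p contributes
  deg_D p - 1 to \<tau>(D) if p \<in> \<partial>D and nothing if deg_D p = d. This gives
  \<tau>(D) = \<Sum> \<tau>(D_i) + (m - 1), respectively \<tau>(D) = \<Sum> \<tau>(D_i) - (d - m).
*)

theory Submission
  imports Defs
begin

definition tree_nbrs :: "nat \<Rightarrow> nat list \<Rightarrow> nat list set" where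
  "tree_nbrs d x = {y. tree_adj d x y}"

lemma tree_adj_sym: "tree_adj d x y \<longleftrightarrow> tree_adj d y x"
  by (auto simp: tree_adj_def)

lemma not_tree_adj_self [simp]: "\<not> tree_adj d x x"
  by (auto simp: tree_adj_def)

lemma snoc_in_tree_vertices:
  assumes "x \<noteq> []" "x \<in> tree_vertices d"
  shows "x @ [i] \<in> tree_vertices d \<longleftrightarrow> i < d - 1"
  using assms by (cases x) (auto simp: tree_vertices_def)

lemma butlast_in_tree_vertices:
  assumes "x \<in> tree_vertices d"
  shows "butlast x \<in> tree_vertices d"
  using assms by (cases x rule: rev_cases)
    (auto simp: tree_vertices_def butlast_append dest: in_set_butlastD)

lemma tree_nbrs_Nil: "tree_nbrs d [] = (\<lambda>i. [i]) ` {..<d}"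
  by (auto simp: tree_nbrs_def tree_adj_def tree_vertices_def)

lemma tree_nbrs_non_root:
  assumes "x \<noteq> []" "x \<in> tree_vertices d"
  shows "tree_nbrs d x = insert (butlast x) ((\<lambda>i. x @ [i]) ` {..<d - 1})"
proof -
  have "x = butlast x @ [last x]"
    using assms(1) by simp
  then show ?thesis
    using snoc_in_tree_vertices[OF assms] butlast_in_tree_vertices[OF assms(2)] assms(2)
    unfolding tree_nbrs_def tree_adj_def by (auto intro: exI[of _ "last x"])
qed

lemma
  assumes "x \<in> tree_vertices d"
  shows card_tree_nbrs: "card (tree_nbrs d x) = d"
    and finite_tree_nbrs: "finite (tree_nbrs d x)"
proof -
  have "card (tree_nbrs d x) = d \<and> finite (tree_nbrs d x)"
  proof (cases "x = []")
    case True
    then show ?thesis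
      by (simp add: tree_nbrs_Nil card_image inj_on_def)
  next
    case False
    have "d \<ge> 1"
      using assms False by (cases x) (auto simp: tree_vertices_def)
    moreover have "butlast x \<notin> (\<lambda>i. x @ [i]) ` {..<d - 1}"
      by (auto dest: arg_cong[of _ _ length])
    ultimately show ?thesis
      using False assms by (simp add: tree_nbrs_non_root card_image inj_on_def)
  qed
  then show "card (tree_nbrs d x) = d" "finite (tree_nbrs d x)"
    by auto
qed

lemma degD_eq_card_tree_nbrs: "degD d D x = card (D \<inter> tree_nbrs d x)"
  unfolding degD_def tree_nbrs_def by (metis Collect_conj_eq Collect_mem_eq)

lemma degD_le: "degD d D x \<le> d"
proof (cases "x \<in> tree_vertices d")
  case True
  then show ?thesis
    unfolding degD_eq_card_tree_nbrs
    by (metis card_tree_nbrs finite_tree_nbrs card_mono inf_le2)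
next
  case False
  then have "tree_nbrs d x = {}"
    by (auto simp: tree_nbrs_def tree_adj_def)
  then show ?thesis
    by (simp add: degD_eq_card_tree_nbrs)
qed

lemma degD_mono: "D \<subseteq> D' \<Longrightarrow> finite D' \<Longrightarrow> degD d D x \<le> degD d D' x"
  unfolding degD_def by (rule card_mono) auto

lemma in_bdry_iff: "x \<in> bdry d D \<longleftrightarrow> x \<in> D \<and> degD d D x \<noteq> d"
  using degD_le[of d D x] by (auto simp: bdry_def)

lemma ex_tree_adj_outside:
  assumes "x \<in> tree_vertices d" "degD d D x < d"
  obtains y where "tree_adj d x y" "y \<notin> D"
proof -
  have "\<not> tree_nbrs d x \<subseteq> D"
    using assms card_tree_nbrs[OF assms(1)] by (auto simp: degD_eq_card_tree_nbrs Int_absorb1)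
  then show ?thesis
    using that by (auto simp: tree_nbrs_def)
qed

lemma induced_path_extends:
  assumes "(a, b) \<in> (induced_edges d D)\<^sup>*" "a \<noteq> []" "butlast a \<notin> D"
  shows "\<exists>ys. b = a @ ys"
  using assms(1)
proof (induction rule: rtrancl_induct)
  case base
  then show ?case by simp
next
  case (step b c)
  then obtain ys where ys: "b = a @ ys" by auto
  from step(2) have "c \<in> D" and "(\<exists>i. c = b @ [i]) \<or> (\<exists>i. b = c @ [i])"
    by (auto simp: induced_edges_def tree_adj_def)
  then show ?case
    using ys assms(3) by (cases ys rule: rev_cases) auto
qed

lemma domain_top_vertex:
  assumes "is_domain d D"
  obtains t where "t \<in> D" "\<And>x. x \<in> D \<Longrightarrow> length t \<le> length x"
    "\<And>x. x \<in> D \<Longrightarrow> x \<noteq> t \<Longrightarrow> x \<noteq> [] \<and> butlast x \<in> D"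
proof -
  have "finite D" "D \<noteq> {}"
    using assms by (auto simp: is_domain_def)
  then obtain t where t: "t \<in> D" "\<And>x. x \<in> D \<Longrightarrow> length t \<le> length x"
    by (metis arg_min_if_finite(1,2) not_le_imp_less)
  have "x \<noteq> [] \<and> butlast x \<in> D" if "x \<in> D" "x \<noteq> t" for x
  proof (rule ccontr)
    assume parent_outside: "\<not> (x \<noteq> [] \<and> butlast x \<in> D)"
    have "x \<noteq> []"
      using t(2)[OF that(1)] that by (cases t) auto
    moreover have "(x, t) \<in> (induced_edges d D)\<^sup>*"
      using assms that(1) t(1) by (auto simp: is_domain_def)
    ultimately obtain ys where "t = x @ ys"
      using induced_path_extends parent_outside by blast
    then show False
      using t(2)[OF that(1)] that(2) by simp
  qed
  with t that show ?thesis by blast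
qed

text \<open>Handshake lemma: a domain is a tree, so it has \<open>card D - 1\<close> edges.\<close>

lemma sum_degD_domain:
  assumes "is_domain d D"
  shows "(\<Sum>x\<in>D. degD d D x) = 2 * (card D - 1)"
proof -
  obtain t where t: "t \<in> D" "\<And>x. x \<in> D \<Longrightarrow> length t \<le> length x"
    "\<And>x. x \<in> D \<Longrightarrow> x \<noteq> t \<Longrightarrow> x \<noteq> [] \<and> butlast x \<in> D"
    using domain_top_vertex[OF assms] by blast
  have fin: "finite D" and sub: "D \<subseteq> tree_vertices d"
    using assms by (auto simp: is_domain_def)
  define children where "children x = {y \<in> D. \<exists>i. y = x @ [i]}" for x
  define parent where "parent x = {y \<in> D. \<exists>i. x = y @ [i]}" for x
  have degD_split: "degD d D x = card (children x) + card (parent x)" if "x \<in> D" for x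
  proof -
    have "{y \<in> D. tree_adj d x y} = children x \<union> parent x"
      using sub that by (auto simp: children_def parent_def tree_adj_def)
    moreover have "children x \<inter> parent x = {}"
      by (auto simp: children_def parent_def)
    ultimately show ?thesis
      using fin by (simp add: degD_def card_Un_disjoint children_def parent_def)
  qed
  have card_parent: "card (parent x) = (if x = t then 0 else 1)" if "x \<in> D" for x
  proof -
    have "(\<exists>i. x = y @ [i]) \<longleftrightarrow> x \<noteq> [] \<and> y = butlast x" for y
      by (metis append_butlast_last_id butlast_snoc snoc_eq_iff_butlast)
    then have "parent x = (if x \<noteq> [] \<and> butlast x \<in> D then {butlast x} else {})"
      by (auto simp: parent_def)
    moreover have "butlast t \<notin> D" if "t \<noteq> []"
      using t(2)[of "butlast t"] that by (cases t) auto
    ultimately show ?thesis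
      using t(3)[OF that] by auto
  qed
  have "(\<Sum>x\<in>D. card (parent x)) = card (D - {t})"
    using fin t(1) by (simp add: card_parent sum.If_cases Diff_eq Int_def)
  moreover have "(\<Sum>x\<in>D. card (children x)) = card (D - {t})"
  proof -
    have "(\<Sum>x\<in>D. card (children x)) = card (\<Union>x\<in>D. children x)"
      using fin by (intro card_UN_disjoint[symmetric]) (auto simp: children_def)
    also have "(\<Union>x\<in>D. children x) = D - {t}"
    proof (intro equalityI subsetI)
      fix y
      assume "y \<in> (\<Union>x\<in>D. children x)"
      then show "y \<in> D - {t}"
        using t(2) by (fastforce simp: children_def)
    next
      fix y
      assume "y \<in> D - {t}"
      then show "y \<in> (\<Union>x\<in>D. children x)"
        using t(3)[of y] unfolding children_def
        by (intro UN_I[of "butlast y"]) (auto intro: exI[of _ "last y"])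
    qed
    finally show ?thesis .
  qed
  ultimately show ?thesis
    using fin t(1) by (simp add: degD_split sum.distrib)
qed

lemma card_bdry_tau:
  assumes "is_domain d D"
  shows "(int d - 1) * int (card (bdry d D)) = tau d D + (int d - 2) * int (card D) + 2"
proof -
  have fin: "finite D" and "D \<noteq> {}"
    using assms by (auto simp: is_domain_def)
  then have "card D \<ge> 1"
    by (simp add: Suc_leI card_gt_0_iff)
  have bdry_sub: "bdry d D \<subseteq> D"
    by (auto simp: bdry_def)
  have interior: "degD d D x = d" if "x \<in> D - bdry d D" for x
    using that by (auto simp: in_bdry_iff)
  have "2 * (card D - 1) = (\<Sum>x\<in>bdry d D. degD d D x) + (\<Sum>x\<in>D - bdry d D. degD d D x)"
    using sum_degD_domain[OF assms] sum.subset_diff[OF bdry_sub fin, of "degD d D"] by simp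
  also have "(\<Sum>x\<in>D - bdry d D. degD d D x) = d * (card D - card (bdry d D))"
    using interior fin bdry_sub by (simp add: card_Diff_subset finite_subset)
  finally have "int (2 * (card D - 1)) =
      int ((\<Sum>x\<in>bdry d D. degD d D x) + d * (card D - card (bdry d D)))"
    by (rule arg_cong)
  then have "2 * (int (card D) - 1) =
      int (\<Sum>x\<in>bdry d D. degD d D x) + int d * (int (card D) - int (card (bdry d D)))"
    using \<open>card D \<ge> 1\<close> card_mono[OF fin bdry_sub]
    by (simp only: of_nat_add of_nat_mult of_nat_diff) simp
  moreover have "tau d D = int (\<Sum>x\<in>bdry d D. degD d D x) - int (card (bdry d D))"
    by (simp add: tau_def sum_subtractf)
  ultimately show ?thesis
    by (simp add: algebra_simps)
qed

lemma degD_pos: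
  assumes "is_domain d D" "card D \<ge> 2" "x \<in> D"
  shows "degD d D x \<ge> 1"
proof -
  have fin: "finite D"
    using assms by (auto simp: is_domain_def)
  obtain y where "y \<in> D" "y \<noteq> x"
    using assms(2,3) by (metis card_le_Suc0_iff_eq fin not_less_eq_eq numeral_2_eq_2)
  then have "(x, y) \<in> (induced_edges d D)\<^sup>*"
    using assms by (auto simp: is_domain_def)
  then obtain z where "(x, z) \<in> induced_edges d D"
    using \<open>y \<noteq> x\<close> by (metis converse_rtranclE)
  then have "{w \<in> D. tree_adj d x w} \<noteq> {}"
    by (auto simp: induced_edges_def)
  then show ?thesis
    using fin by (simp add: degD_def Suc_le_eq card_gt_0_iff)
qed

lemma tau_nonneg:
  assumes "is_domain d D" "card D \<ge> 2"
  shows "tau d D \<ge> 0"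
  unfolding tau_def using degD_pos[OF assms] by (intro sum_nonneg) (force simp: bdry_def)

lemma degD_insert:
  assumes "finite D" "y \<notin> D"
  shows "degD d (insert y D) z = degD d D z + (if tree_adj d z y then 1 else 0)"
proof -
  have "{w \<in> insert y D. tree_adj d z w} =
      (if tree_adj d z y then insert y {w \<in> D. tree_adj d z w} else {w \<in> D. tree_adj d z w})"
    by auto
  then show ?thesis
    using assms by (simp add: degD_def)
qed

lemma is_domain_insert_adj:
  assumes "is_domain d D" "x \<in> D" "tree_adj d x y"
  shows "is_domain d (insert y D)"
proof -
  let ?E = "induced_edges d (insert y D)"
  have "induced_edges d D \<subseteq> ?E"
    by (auto simp: induced_edges_def)
  then have old: "(a, b) \<in> ?E\<^sup>*" if "a \<in> D" "b \<in> D" for a b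
    using assms(1) that rtrancl_mono unfolding is_domain_def by blast
  have "(x, y) \<in> ?E" "(y, x) \<in> ?E"
    using assms(2,3) tree_adj_sym by (auto simp: induced_edges_def)
  then have new: "(x, y) \<in> ?E\<^sup>*" "(y, x) \<in> ?E\<^sup>*"
    by auto
  have "(a, b) \<in> ?E\<^sup>*" if "a \<in> insert y D" "b \<in> insert y D" for a b
  proof -
    have "(a, x) \<in> ?E\<^sup>*"
      using that(1) old[of a x] new(2) assms(2) by auto
    moreover have "(x, b) \<in> ?E\<^sup>*"
      using that(2) old[of x b] new(1) assms(2) by auto
    ultimately show ?thesis
      by (rule rtrancl_trans)
  qed
  moreover have "y \<in> tree_vertices d"
    using assms(3) by (simp add: tree_adj_def)
  ultimately show ?thesis
    using assms(1) by (auto simp: is_domain_def)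
qed

text \<open>A new vertex attached to a domain sees only its attachment point: otherwise the
  enlarged domain would have too many edges for a tree.\<close>

lemma nbrs_of_new_leaf:
  assumes D: "is_domain d D" and "x \<in> D" "y \<notin> D" "tree_adj d x y"
  shows "{z \<in> D. tree_adj d y z} = {x}"
proof -
  have fin: "finite D" and "D \<noteq> {}"
    using D by (auto simp: is_domain_def)
  then have "card D \<ge> 1"
    by (simp add: Suc_leI card_gt_0_iff)
  let ?N = "{z \<in> D. tree_adj d y z}"
  have "degD d (insert y D) y = card ?N"
    by (auto simp: degD_def intro: arg_cong[where f = card])
  moreover have "(\<Sum>z\<in>D. if tree_adj d z y then 1 else 0) = card ?N"
    using fin by (simp add: sum.If_cases tree_adj_sym[of d _ y] Int_def)
  ultimately have "(\<Sum>z\<in>insert y D. degD d (insert y D) z) = (\<Sum>z\<in>D. degD d D z) + 2 * card ?N"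
    using fin assms(3) by (simp add: degD_insert sum.distrib)
  moreover have "card (insert y D) = card D + 1"
    using fin assms(3) by simp
  ultimately have "card ?N = 1"
    using sum_degD_domain[OF D] sum_degD_domain[OF is_domain_insert_adj[OF D assms(2,4)]]
      \<open>card D \<ge> 1\<close> by simp
  moreover have "x \<in> ?N"
    using assms(2,4) tree_adj_sym by auto
  ultimately show ?thesis
    by (metis card_1_singletonE singletonD)
qed

lemma degD_insert_leaf:
  assumes "is_domain d D" "x \<in> D" "y \<notin> D" "tree_adj d x y"
  shows "degD d (insert y D) y = 1"
    and "z \<in> D \<Longrightarrow> degD d (insert y D) z = degD d D z + (if z = x then 1 else 0)"
proof -
  have fin: "finite D"
    using assms by (auto simp: is_domain_def)
  have "{w \<in> insert y D. tree_adj d y w} = {w \<in> D. tree_adj d y w}"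
    by auto
  then have "{w \<in> insert y D. tree_adj d y w} = {x}"
    using nbrs_of_new_leaf[OF assms] by simp
  then show "degD d (insert y D) y = 1"
    by (simp add: degD_def)
  show "degD d (insert y D) z = degD d D z + (if z = x then 1 else 0)" if "z \<in> D"
  proof -
    have "tree_adj d z y \<longleftrightarrow> z = x"
      using nbrs_of_new_leaf[OF assms] that tree_adj_sym[of d z y] by blast
    then show ?thesis
      using degD_insert[OF fin assms(3)] by presburger
  qed
qed

definition partial_vertices :: "nat \<Rightarrow> nat list set \<Rightarrow> nat list set" where
  "partial_vertices d D = {z \<in> D. 2 \<le> degD d D z \<and> degD d D z < d}"

lemma tau_le_if_partial_vertices_subset:
  assumes "is_domain d D" "card D \<ge> 2" "partial_vertices d D \<subseteq> {x}" "d \<ge> 2"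
  shows "tau d D \<le> int d - 2"
proof -
  have "finite (bdry d D)"
    using assms(1) by (auto simp: is_domain_def bdry_def)
  have "tau d D \<le> (\<Sum>z\<in>bdry d D. if z = x then int d - 2 else 0)"
    unfolding tau_def
  proof (rule sum_mono)
    fix z
    assume z: "z \<in> bdry d D"
    then have "z \<in> D" "degD d D z < d"
      by (auto simp: bdry_def)
    moreover have "degD d D z \<ge> 1"
      using degD_pos[OF assms(1,2)] z by (auto simp: bdry_def)
    ultimately show "int (degD d D z) - 1 \<le> (if z = x then int d - 2 else 0)"
      using assms(3) by (auto simp: partial_vertices_def)
  qed
  also have "\<dots> \<le> int d - 2"
    using \<open>finite (bdry d D)\<close> assms(4) by (simp add: sum.delta')
  finally show ?thesis .
qed

lemma bdry_nonempty:
  assumes "is_domain d D" "d \<ge> 2"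
  shows "bdry d D \<noteq> {}"
proof -
  have "finite D" "D \<noteq> {}"
    using assms(1) by (auto simp: is_domain_def)
  then obtain x where x: "x \<in> D" "length x = Max (length ` D)"
    by (metis (mono_tags, lifting) Max_in finite_imageI image_iff image_is_empty)
  then have longest: "length z \<le> length x" if "z \<in> D" for z
    using \<open>finite D\<close> that by simp
  have "y = butlast x" if "y \<in> D" "tree_adj d x y" for y
    using that longest[of y] by (auto simp: tree_adj_def)
  then have "{y \<in> D. tree_adj d x y} \<subseteq> {butlast x}"
    by blast
  then have "degD d D x \<le> 1"
    unfolding degD_def using card_mono[of "{butlast x}"] by simp
  then show ?thesis
    using x(1) assms(2) by (auto simp: bdry_def)
qed

text \<open>Grow a domain leaf by leaf, always attaching the new leaf at the partial vertex if there
  is one: then at most one vertex is ever partial.\<close>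

lemma ex_domain_partial_vertices_subset:
  assumes "d \<ge> 2" "k \<ge> 1"
  shows "\<exists>D x. is_domain d D \<and> card D = k \<and> partial_vertices d D \<subseteq> {x}"
  using assms(2)
proof (induction k rule: nat_induct_at_least)
  case base
  have "is_domain d {[]}"
    by (simp add: is_domain_def tree_vertices_def)
  moreover have "partial_vertices d {[]} = {}"
    by (simp add: partial_vertices_def degD_def Collect_conv_if)
  ultimately show ?case
    by auto
next
  case (Suc k)
  then obtain D x where D: "is_domain d D" "card D = k" and partial: "partial_vertices d D \<subseteq> {x}"
    by blast
  obtain v where v: "v \<in> bdry d D" and v_partial: "partial_vertices d D \<noteq> {} \<Longrightarrow> v = x"
  proof (cases "partial_vertices d D = {}")
    case True
    then show ?thesis
      using that bdry_nonempty[OF D(1) assms(1)] by blast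
  next
    case False
    then have "x \<in> partial_vertices d D"
      using partial by auto
    then show ?thesis
      using that by (auto simp: partial_vertices_def bdry_def)
  qed
  have "v \<in> D" "v \<in> tree_vertices d" "degD d D v < d"
    using v D(1) by (auto simp: bdry_def is_domain_def)
  then obtain y where y: "tree_adj d v y" "y \<notin> D"
    using ex_tree_adj_outside by blast
  note degD_new = degD_insert_leaf[OF D(1) \<open>v \<in> D\<close> y(2,1)]
  have "partial_vertices d (insert y D) \<subseteq> {v}"
  proof
    fix z
    assume z: "z \<in> partial_vertices d (insert y D)"
    show "z \<in> {v}"
    proof (rule ccontr)
      assume "z \<notin> {v}"
      moreover have "z \<noteq> y"
        using z degD_new(1) by (auto simp: partial_vertices_def)
      ultimately have "z \<in> partial_vertices d D"
        using z degD_new(2) by (auto simp: partial_vertices_def)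
      then show False
        using partial v_partial \<open>z \<notin> {v}\<close> by auto
    qed
  qed
  moreover have "card (insert y D) = Suc k"
    using D y(2) by (simp add: is_domain_def)
  ultimately show ?case
    using is_domain_insert_adj[OF D(1) \<open>v \<in> D\<close> y(1)] by blast
qed

lemma ex_domain_tau_le:
  assumes "d \<ge> 2" "k \<ge> 2"
  obtains D where "is_domain d D" "card D = k" "tau d D \<le> int d - 2"
  using ex_domain_partial_vertices_subset[OF assms(1), of k] assms
    tau_le_if_partial_vertices_subset by fastforce

lemma optimal_iff_card_bdry_le:
  assumes "is_domain d D"
  shows "optimal d D \<longleftrightarrow>
    (\<forall>D'. is_domain d D' \<and> card D' = card D \<longrightarrow> card (bdry d D) \<le> card (bdry d D'))"
proof -
  define S where "S = {card (bdry d D') | D'. is_domain d D' \<and> card D' = card D}"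
  have "card (bdry d D') \<le> card D'" if "is_domain d D'" for D'
    using that by (auto simp: is_domain_def bdry_def intro: card_mono)
  then have "S \<subseteq> {..card D}"
    unfolding S_def by fastforce
  then have "finite S"
    by (rule finite_subset) simp
  moreover have "card (bdry d D) \<in> S"
    using assms by (auto simp: S_def)
  ultimately have "card (bdry d D) = Min S \<longleftrightarrow> (\<forall>s\<in>S. card (bdry d D) \<le> s)"
    by (metis Min_eqI Min_le antisym)
  then show ?thesis
    by (auto simp: optimal_def Iso_def S_def)
qed

lemma optimal_iff_tau_le:
  assumes "d \<ge> 2" "is_domain d D" "card D \<ge> 2"
  shows "optimal d D \<longleftrightarrow> tau d D \<le> int d - 2"
proof -
  have slope: "(int d - 1) * (int (card (bdry d D)) - int (card (bdry d D'))) = tau d D - tau d D'"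
    if "is_domain d D'" "card D' = card D" for D'
    using card_bdry_tau[OF assms(2)] card_bdry_tau[OF that(1)] that(2) by (simp add: algebra_simps)
  have "int d - 1 \<ge> 1"
    using assms(1) by simp
  show ?thesis
  proof
    assume "optimal d D"
    obtain D' where D': "is_domain d D'" "card D' = card D" "tau d D' \<le> int d - 2"
      using ex_domain_tau_le[OF assms(1,3)] by metis
    then have "int (card (bdry d D)) - int (card (bdry d D')) \<le> 0"
      using \<open>optimal d D\<close> by (simp add: optimal_iff_card_bdry_le[OF assms(2)])
    then have "tau d D - tau d D' \<le> 0"
      using slope[OF D'(1,2)] \<open>int d - 1 \<ge> 1\<close> by (metis mult_nonneg_nonpos zero_le_one order_trans)
    then show "tau d D \<le> int d - 2"
      using D'(3) by linarith
  next
    assume tau_le: "tau d D \<le> int d - 2"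
    have "card (bdry d D) \<le> card (bdry d D')" if D': "is_domain d D'" "card D' = card D" for D'
    proof (rule ccontr)
      assume "\<not> card (bdry d D) \<le> card (bdry d D')"
      then have "(int d - 1) * 1 \<le> (int d - 1) * (int (card (bdry d D)) - int (card (bdry d D')))"
        using \<open>int d - 1 \<ge> 1\<close> by (intro mult_left_mono) auto
      then have "int d - 1 \<le> tau d D - tau d D'"
        using slope[OF D'] by simp
      moreover have "tau d D' \<ge> 0"
        using tau_nonneg D' assms(3) by simp
      ultimately show False
        using tau_le by linarith
    qed
    then show "optimal d D"
      by (simp add: optimal_iff_card_bdry_le[OF assms(2)])
  qed
qed

lemma tau_eq_sum_domain:
  assumes "finite E"
  shows "tau d E = (\<Sum>x\<in>E. if degD d E x < d then int (degD d E x) - 1 else 0)"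
  unfolding tau_def bdry_def using assms by (simp add: sum.inter_filter)

locale gluing =
  fixes d :: nat and D :: "nat list set" and m :: nat and Ds :: "nat \<Rightarrow> nat list set"
    and p :: "nat list"
  assumes glued: "glued_at d D m Ds p"
begin

lemma
  shows two_le_m: "2 \<le> m"
    and is_domain_piece: "i \<in> {1..m} \<Longrightarrow> is_domain d (Ds i)"
    and two_le_card_piece: "i \<in> {1..m} \<Longrightarrow> 2 \<le> card (Ds i)"
    and p_in_bdry_piece: "i \<in> {1..m} \<Longrightarrow> p \<in> bdry d (Ds i)"
    and D_eq_Union: "D = (\<Union>i\<in>{1..m}. Ds i)"
    and pieces_meet_at_p:
      "i \<in> {1..m} \<Longrightarrow> j \<in> {1..m} \<Longrightarrow> i \<noteq> j \<Longrightarrow> Ds i \<inter> Ds j = {p}"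
  using glued by (auto simp: glued_at_def)

lemma finite_piece: "i \<in> {1..m} \<Longrightarrow> finite (Ds i)"
  using is_domain_piece by (auto simp: is_domain_def)

lemma p_in_piece: "i \<in> {1..m} \<Longrightarrow> p \<in> Ds i"
  using p_in_bdry_piece by (auto simp: bdry_def)

lemma piece_subset: "i \<in> {1..m} \<Longrightarrow> Ds i \<subseteq> D"
  using D_eq_Union by auto

lemma D_eq_insert_petals: "D = insert p (\<Union>i\<in>{1..m}. Ds i - {p})"
  using D_eq_Union p_in_piece two_le_m by auto

lemma petals_disjoint:
  "i \<in> {1..m} \<Longrightarrow> j \<in> {1..m} \<Longrightarrow> i \<noteq> j \<Longrightarrow> (Ds i - {p}) \<inter> (Ds j - {p}) = {}"
  using pieces_meet_at_p by auto

lemma finite_D: "finite D"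
  using D_eq_Union finite_piece by auto

lemma sum_glued: "(\<Sum>x\<in>D. f x) = f p + (\<Sum>i\<in>{1..m}. \<Sum>x\<in>Ds i - {p}. f x)"
proof -
  have "(\<Sum>x\<in>D. f x) = f p + (\<Sum>x\<in>(\<Union>i\<in>{1..m}. Ds i - {p}). f x)"
    by (subst D_eq_insert_petals, rule sum.insert) (use finite_piece in auto)
  also have "(\<Sum>x\<in>(\<Union>i\<in>{1..m}. Ds i - {p}). f x) = (\<Sum>i\<in>{1..m}. \<Sum>x\<in>Ds i - {p}. f x)"
    using finite_piece petals_disjoint by (intro sum.UNION_disjoint) auto
  finally show ?thesis .
qed

lemma card_glued: "card D - 1 = (\<Sum>i\<in>{1..m}. card (Ds i) - 1)"
proof -
  have "card D = 1 + (\<Sum>i\<in>{1..m}. card (Ds i - {p}))"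
    using sum_glued[of "\<lambda>_. 1 :: nat"] by simp
  then show ?thesis
    using finite_piece p_in_piece by simp
qed

lemma is_domain_glued: "is_domain d D"
  unfolding is_domain_def
proof (intro conjI ballI)
  fix a b
  assume "a \<in> D" "b \<in> D"
  then obtain i j where ij: "i \<in> {1..m}" "a \<in> Ds i" "j \<in> {1..m}" "b \<in> Ds j"
    using D_eq_Union by auto
  have to_D: "(induced_edges d (Ds k))\<^sup>* \<subseteq> (induced_edges d D)\<^sup>*" if "k \<in> {1..m}" for k
    using piece_subset[OF that] by (intro rtrancl_mono) (auto simp: induced_edges_def)
  have "(a, p) \<in> (induced_edges d D)\<^sup>*" "(p, b) \<in> (induced_edges d D)\<^sup>*"
    using is_domain_piece ij p_in_piece to_D unfolding is_domain_def by blast+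
  then show "(a, b) \<in> (induced_edges d D)\<^sup>*"
    by simp
next
  show "D \<subseteq> tree_vertices d"
    using D_eq_Union is_domain_piece unfolding is_domain_def by blast
qed (use finite_D D_eq_insert_petals in auto)

lemma two_le_card_glued: "2 \<le> card D"
  using two_le_m two_le_card_piece[of 1] card_mono[OF finite_D piece_subset[of 1]] by simp

text \<open>No edge of \<open>D\<close> joins two different pieces (that would close a cycle), so degrees in \<open>D\<close>
  are inherited from the pieces. Rather than exhibiting cycles, compare both sides of the
  handshake lemma: the inequalities below are termwise and their totals agree.\<close>

lemma
  shows degD_glued_at_p: "degD d D p = (\<Sum>i\<in>{1..m}. degD d (Ds i) p)"
    and degD_glued_petal: "i \<in> {1..m} \<Longrightarrow> x \<in> Ds i - {p} \<Longrightarrow> degD d D x = degD d (Ds i) x"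
proof -
  let ?N = "\<lambda>i. {y \<in> Ds i. tree_adj d p y}"
  have "?N i \<inter> ?N j = {}" if "i \<in> {1..m}" "j \<in> {1..m}" "i \<noteq> j" for i j
  proof -
    have "?N i \<inter> ?N j \<subseteq> {y \<in> Ds i \<inter> Ds j. tree_adj d p y}"
      by blast
    then show ?thesis
      using pieces_meet_at_p[OF that] by (simp add: Collect_conv_if)
  qed
  then have "(\<Sum>i\<in>{1..m}. degD d (Ds i) p) = card (\<Union>i\<in>{1..m}. ?N i)"
    unfolding degD_def using finite_piece by (intro card_UN_disjoint[symmetric]) auto
  also have "\<dots> \<le> degD d D p"
    unfolding degD_def using finite_D piece_subset by (intro card_mono) fastforce+
  finally have at_p: "(\<Sum>i\<in>{1..m}. degD d (Ds i) p) \<le> degD d D p" .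
  have petal: "degD d (Ds i) x \<le> degD d D x" if "i \<in> {1..m}" for i x
    using degD_mono[OF piece_subset[OF that] finite_D] .
  have "(\<Sum>i\<in>{1..m}. degD d (Ds i) p) + (\<Sum>i\<in>{1..m}. \<Sum>x\<in>Ds i - {p}. degD d (Ds i) x)
      = (\<Sum>i\<in>{1..m}. \<Sum>x\<in>Ds i. degD d (Ds i) x)"
    unfolding sum.distrib[symmetric] using finite_piece p_in_piece
    by (intro sum.cong refl) (rule sum.remove[symmetric]; simp)
  also have "\<dots> = (\<Sum>i\<in>{1..m}. 2 * (card (Ds i) - 1))"
    using is_domain_piece by (intro sum.cong refl) (simp add: sum_degD_domain)
  also have "\<dots> = 2 * (card D - 1)"
    by (simp only: card_glued sum_distrib_left)
  also have "\<dots> = (\<Sum>x\<in>D. degD d D x)"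
    by (simp add: sum_degD_domain[OF is_domain_glued])
  also have "\<dots> = degD d D p + (\<Sum>i\<in>{1..m}. \<Sum>x\<in>Ds i - {p}. degD d D x)"
    by (rule sum_glued)
  finally have totals:
    "(\<Sum>i\<in>{1..m}. degD d (Ds i) p) + (\<Sum>i\<in>{1..m}. \<Sum>x\<in>Ds i - {p}. degD d (Ds i) x)
      = degD d D p + (\<Sum>i\<in>{1..m}. \<Sum>x\<in>Ds i - {p}. degD d D x)" .
  have petal_sums: "(\<Sum>x\<in>Ds i - {p}. degD d (Ds i) x) \<le> (\<Sum>x\<in>Ds i - {p}. degD d D x)"
    if "i \<in> {1..m}" for i
    using petal[OF that] by (rule sum_mono)
  have petal_total: "(\<Sum>i\<in>{1..m}. \<Sum>x\<in>Ds i - {p}. degD d (Ds i) x)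
      \<le> (\<Sum>i\<in>{1..m}. \<Sum>x\<in>Ds i - {p}. degD d D x)"
    using petal_sums by (rule sum_mono)
  show "degD d D p = (\<Sum>i\<in>{1..m}. degD d (Ds i) p)"
    using totals at_p petal_total by linarith
  assume i: "i \<in> {1..m}" and x: "x \<in> Ds i - {p}"
  have "(\<Sum>i\<in>{1..m}. \<Sum>x\<in>Ds i - {p}. degD d (Ds i) x)
      = (\<Sum>i\<in>{1..m}. \<Sum>x\<in>Ds i - {p}. degD d D x)"
    using totals at_p petal_total by linarith
  then have "(\<Sum>x\<in>Ds i - {p}. degD d (Ds i) x) = (\<Sum>x\<in>Ds i - {p}. degD d D x)"
    using petal_sums i by (rule sum_mono_inv) simp_all
  from this petal[OF i] x have "degD d (Ds i) x = degD d D x"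
    by (rule sum_mono_inv) (simp add: finite_piece[OF i])
  then show "degD d D x = degD d (Ds i) x"
    by simp
qed

lemma tau_glued:
  "tau d D = (if p \<in> bdry d D then (\<Sum>i = 1..m. tau d (Ds i)) + (int m - 1)
     else (\<Sum>i = 1..m. tau d (Ds i)) - (int d - int m))"
proof -
  define h where "h E x = (if degD d E x < d then int (degD d E x) - 1 else 0)" for E x
  define S where "S = (\<Sum>i\<in>{1..m}. \<Sum>x\<in>Ds i - {p}. h (Ds i) x)"
  have "tau d D = h D p + (\<Sum>i\<in>{1..m}. \<Sum>x\<in>Ds i - {p}. h D x)"
    unfolding h_def by (simp add: tau_eq_sum_domain[OF finite_D] sum_glued)
  also have "(\<Sum>i\<in>{1..m}. \<Sum>x\<in>Ds i - {p}. h D x) = S"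
    unfolding S_def h_def using degD_glued_petal by (intro sum.cong refl) simp
  finally have tau_D: "tau d D = h D p + S" .
  have "tau d (Ds i) = int (degD d (Ds i) p) - 1 + (\<Sum>x\<in>Ds i - {p}. h (Ds i) x)"
    if "i \<in> {1..m}" for i
  proof -
    have "tau d (Ds i) = h (Ds i) p + (\<Sum>x\<in>Ds i - {p}. h (Ds i) x)"
      unfolding h_def tau_eq_sum_domain[OF finite_piece[OF that]]
      using finite_piece[OF that] p_in_piece[OF that] by (rule sum.remove)
    moreover have "degD d (Ds i) p < d"
      using p_in_bdry_piece[OF that] by (simp add: bdry_def)
    ultimately show ?thesis
      by (simp add: h_def)
  qed
  then have "(\<Sum>i = 1..m. tau d (Ds i)) = int (\<Sum>i\<in>{1..m}. degD d (Ds i) p) - int m + S"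
    by (simp add: S_def sum.distrib sum_subtractf)
  then have tau_pieces: "(\<Sum>i = 1..m. tau d (Ds i)) = int (degD d D p) - int m + S"
    by (simp add: degD_glued_at_p)
  show ?thesis
  proof (cases "p \<in> bdry d D")
    case True
    then have "h D p = int (degD d D p) - 1"
      by (simp add: h_def bdry_def)
    then show ?thesis
      using True tau_D tau_pieces by simp
  next
    case False
    then have "degD d D p = d"
      using D_eq_insert_petals by (simp add: in_bdry_iff)
    then show ?thesis
      using False tau_D tau_pieces by (simp add: h_def)
  qed
qed

end

theorem mainTheorem13:
  fixes d m :: nat and D :: "nat list set" and Ds :: "nat \<Rightarrow> nat list set" and p :: "nat list"
  assumes "d \<ge> 2"
    and "glued_at d D m Ds p"
  shows "optimal d D \<longleftrightarrow>
    ((p \<in> bdry d D \<and> (\<Sum>i = 1..m. tau d (Ds i)) + (int m - 1) \<le> int d - 2) \<or>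
     (p \<notin> bdry d D \<and> (\<Sum>i = 1..m. tau d (Ds i)) - (int d - int m) \<le> int d - 2))"
proof -
  interpret gluing d D m Ds p
    using assms(2) by unfold_locales
  have "optimal d D \<longleftrightarrow> tau d D \<le> int d - 2"
    using optimal_iff_tau_le[OF assms(1) is_domain_glued two_le_card_glued] .
  then show ?thesis
    by (simp add: tau_glued)
qed

end
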